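(* For all integers $r\ge1$ and $n\ge 1$, \[K_{A_r}(n\tilde\alpha_{A_r})=\mathsf{js}(\langle n\rangle,\langle n\rangle,r),\] where $\tilde\alpha_{A_r}=\varepsilon_1-\varepsilon_{r+1}$.
   Context: A juggling state is a finitely supported integer vector $\mathbf{s}=\langle s_1,s_2,\dots\rangle$ indexed by heights (trailing zeros omitted). A juggling sequence of length $n$ from $\mathbf{a}$ to $\mathbf{b}$ is a sequence $(\mathbf{s}_0,\dots,\mathbf{s}_n)$ with $\mathbf{s}_0=\mathbf{a}$, $\mathbf{s}_n=\mathbf{b}$, such that for each $i$ there are nonnegative integers $c^{(i)}_k$ (finitely many nonzero) with $\sum_k c^{(i)}_k=(\mathbf{s}_{i-1})_1$ and $(\mathbf{s}_i)_k=(\mathbf{s}_{i-1})_{k+1}+c^{(i)}_k$ for all $k\ge1$. $\mathsf{js}(\mathbf{a},\mathbf{b},n)$ is the number of such sequences. $\Phi^+_{A_r}=\{\varepsilon_i-\varepsilon_j:1\le i<j\le r+1\}\subset\mathbb{R}^{r+1}$; $K_{A_r}(\mu)$ is the number of finite multisets of elements of $\Phi^+_{A_r}$ summing to $\mu$. *)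

theory Defs
  imports Main "HOL-Library.Multiset" "HOL-Library.Function_Algebras"
begin

text \<open>Juggling states: finitely supported integer vectors indexed by heights 1,2,...;
  represented as functions nat => int, with the unused index 0 set to 0.\<close>

definition juggling_state :: "(nat \<Rightarrow> int) \<Rightarrow> bool" where
  "juggling_state s \<longleftrightarrow> s 0 = 0 \<and> finite {k. s k \<noteq> 0}"

definition js_step :: "(nat \<Rightarrow> int) \<Rightarrow> (nat \<Rightarrow> int) \<Rightarrow> bool" where
  "js_step s t \<longleftrightarrow>
     (\<exists>c :: nat \<Rightarrow> nat. c 0 = 0 \<and> finite {k. c k \<noteq> 0} \<and>
        int (\<Sum>k\<in>{k. c k \<noteq> 0}. c k) = s 1 \<and>
        (\<forall>k\<ge>1. t k = s (k + 1) + int (c k)))"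

definition js :: "(nat \<Rightarrow> int) \<Rightarrow> (nat \<Rightarrow> int) \<Rightarrow> nat \<Rightarrow> nat" where
  "js a b n = card {ss :: (nat \<Rightarrow> int) list.
      length ss = n + 1 \<and> ss ! 0 = a \<and> ss ! n = b \<and>
      (\<forall>i\<le>n. juggling_state (ss ! i)) \<and>
      (\<forall>i<n. js_step (ss ! i) (ss ! (i + 1)))}"

definition single_state :: "nat \<Rightarrow> (nat \<Rightarrow> int)" where
  "single_state m = (\<lambda>k. if k = 1 then int m else 0)"

text \<open>Vectors in R^(r+1) with integer coordinates, coordinates indexed 1..r+1
  (functions nat => int vanishing outside 1..r+1). eps i is the standard basis vector.\<close>
definition eps :: "nat \<Rightarrow> (nat \<Rightarrow> int)" where
  "eps i = (\<lambda>k. if k = i then 1 else 0)"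

definition pos_roots_A :: "nat \<Rightarrow> (nat \<Rightarrow> int) set" where
  "pos_roots_A r = {eps i - eps j | i j. 1 \<le> i \<and> i < j \<and> j \<le> r + 1}"

definition kostant_A :: "nat \<Rightarrow> (nat \<Rightarrow> int) \<Rightarrow> nat" where
  "kostant_A r mu = card {M :: (nat \<Rightarrow> int) multiset.
      set_mset M \<subseteq> pos_roots_A r \<and> sum_mset M = mu}"

end

theory Submission
  imports Defs
begin

text \<open>A multiset of positive roots \<open>\<epsilon>\<^sub>i - \<epsilon>\<^sub>j\<close> is a matrix of multiplicities \<open>m i j\<close>
  (\<open>i < j\<close>), i.e. a flow on the vertices \<open>1, \<dots>, r + 1\<close>, and its sum is the net outflow.
  Summing to \<open>n(\<epsilon>\<^sub>1 - \<epsilon>\<^sub>r\<^sub>+\<^sub>1)\<close> means that n units enter at vertex 1, leave at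
  vertex r + 1, and flow is conserved in between. Read vertex i as time i and an edge
  \<open>i \<rightarrow> j\<close> as a ball thrown at time i that lands at time j: the juggling state at time t
  counts, for each height k, the balls landing at time t + k. Conservation at vertex t + 1
  says exactly that the balls thrown at time t + 1 are those landing then, so flows correspond
  bijectively to juggling sequences of length r from \<open>\<langle>n\<rangle>\<close> to \<open>\<langle>n\<rangle>\<close>.\<close>

lemma sum_mset_sum: "sum_mset (\<Sum>a\<in>A. F a) = (\<Sum>a\<in>A. sum_mset (F a))"
  by (induction A rule: infinite_finite_induct) auto

lemma sum_fun_apply: "(\<Sum>a\<in>A. F a) x = (\<Sum>a\<in>A. F a x)"
  by (induction A rule: infinite_finite_induct) auto

definition upper_supported :: "nat \<Rightarrow> (nat \<Rightarrow> nat \<Rightarrow> nat) \<Rightarrow> bool" where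
  "upper_supported r m \<longleftrightarrow> (\<forall>i j. m i j \<noteq> 0 \<longrightarrow> 1 \<le> i \<and> i < j \<and> j \<le> r + 1)"

definition outflow :: "nat \<Rightarrow> (nat \<Rightarrow> nat \<Rightarrow> nat) \<Rightarrow> nat \<Rightarrow> nat" where
  "outflow r m i = (\<Sum>j\<le>r+1. m i j)"

definition inflow :: "nat \<Rightarrow> (nat \<Rightarrow> nat \<Rightarrow> nat) \<Rightarrow> nat \<Rightarrow> nat" where
  "inflow r m j = (\<Sum>i\<le>r+1. m i j)"

definition net_flow :: "nat \<Rightarrow> (nat \<Rightarrow> nat \<Rightarrow> nat) \<Rightarrow> nat \<Rightarrow> int" where
  "net_flow r m k = int (outflow r m k) - int (inflow r m k)"

definition flows :: "nat \<Rightarrow> (nat \<Rightarrow> int) \<Rightarrow> (nat \<Rightarrow> nat \<Rightarrow> nat) set" where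
  "flows r \<mu> = {m. upper_supported r m \<and> net_flow r m = \<mu>}"

definition roots_mset :: "nat \<Rightarrow> (nat \<Rightarrow> nat \<Rightarrow> nat) \<Rightarrow> (nat \<Rightarrow> int) multiset" where
  "roots_mset r m = (\<Sum>i\<le>r+1. \<Sum>j\<le>r+1. replicate_mset (m i j) (eps i - eps j))"

definition root_multiplicities :: "nat \<Rightarrow> (nat \<Rightarrow> int) multiset \<Rightarrow> nat \<Rightarrow> nat \<Rightarrow> nat" where
  "root_multiplicities r M i j =
     (if 1 \<le> i \<and> i < j \<and> j \<le> r + 1 then count M (eps i - eps j) else 0)"

lemma flow_vanishes_outside:
  assumes "upper_supported r m" and "k = 0 \<or> r + 1 < k"
  shows "outflow r m k = 0" and "inflow r m k = 0"
  using assms unfolding upper_supported_def outflow_def inflow_def by fastforce+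

lemma outflow_sink: "upper_supported r m \<Longrightarrow> outflow r m (r + 1) = 0"
  unfolding upper_supported_def outflow_def by force

lemma sum_mset_roots_mset:
  assumes "upper_supported r m"
  shows "sum_mset (roots_mset r m) = net_flow r m"
proof
  fix k
  have coefficient: "int (m i j) * (eps i k - eps j k) =
      (if i = k then int (m i j) else 0) - (if j = k then int (m i j) else 0)" for i j
    by (simp add: eps_def)
  have "sum_mset (roots_mset r m) k =
      (\<Sum>i\<le>r+1. \<Sum>j\<le>r+1. if i = k then int (m i j) else 0)
    - (\<Sum>i\<le>r+1. \<Sum>j\<le>r+1. if j = k then int (m i j) else 0)"
    unfolding roots_mset_def
    by (simp add: sum_mset_sum sum_fun_apply coefficient sum_subtractf del: sum.atMost_Suc)
  also have "\<dots> = (if k \<le> r + 1 then net_flow r m k else 0)"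
    unfolding net_flow_def outflow_def inflow_def
    by (subst (1) sum.swap) (simp del: sum.atMost_Suc)
  also have "\<dots> = net_flow r m k"
    using flow_vanishes_outside[OF assms, of k] by (simp add: net_flow_def)
  finally show "sum_mset (roots_mset r m) k = net_flow r m k" .
qed

lemma upper_supported_root_multiplicities: "upper_supported r (root_multiplicities r M)"
  unfolding upper_supported_def root_multiplicities_def by auto

lemma eps_diff_eq_eps_diff:
  assumes "i < j" and "a < b" and "eps a - eps b = eps i - eps j"
  shows "a = i \<and> b = j"
proof -
  have "eps a i - eps b i = 1" and "eps a j - eps b j = -1"
    using fun_cong[OF assms(3), of i] fun_cong[OF assms(3), of j] assms(1)
    by (simp_all add: eps_def)
  then show ?thesis
    by (simp_all add: eps_def split: if_splits)
qed

lemma count_roots_mset: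
  "count (roots_mset r m) x = (\<Sum>i\<le>r+1. \<Sum>j\<le>r+1. if x = eps i - eps j then m i j else 0)"
  unfolding roots_mset_def by (simp add: count_sum)

lemma count_roots_mset_root:
  assumes "upper_supported r m" and "1 \<le> i" "i < j" "j \<le> r + 1"
  shows "count (roots_mset r m) (eps i - eps j) = m i j"
proof -
  have "(if eps i - eps j = eps a - eps b then m a b else 0) =
      (if b = j then if a = i then m a b else 0 else 0)" for a b
  proof (cases "m a b = 0")
    case False
    then show ?thesis
      using assms eps_diff_eq_eps_diff[of i j a b] unfolding upper_supported_def by auto
  qed auto
  then show ?thesis
    using assms(2-) by (simp add: count_roots_mset del: sum.atMost_Suc)
qed

lemma count_roots_mset_nonroot:
  assumes "upper_supported r m" and "x \<notin> pos_roots_A r"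
  shows "count (roots_mset r m) x = 0"
proof -
  have "(if x = eps i - eps j then m i j else 0) = 0" for i j
  proof (cases "m i j = 0")
    case False
    then have "eps i - eps j \<in> pos_roots_A r"
      using assms(1) unfolding upper_supported_def pos_roots_A_def by blast
    then show ?thesis
      using assms(2) by auto
  qed simp
  then show ?thesis
    by (simp add: count_roots_mset del: sum.atMost_Suc)
qed

lemma roots_mset_root_multiplicities:
  assumes "set_mset M \<subseteq> pos_roots_A r"
  shows "roots_mset r (root_multiplicities r M) = M"
proof (rule multiset_eqI)
  fix x
  show "count (roots_mset r (root_multiplicities r M)) x = count M x"
  proof (cases "x \<in> pos_roots_A r")
    case True
    then obtain i j where "1 \<le> i" "i < j" "j \<le> r + 1" and "x = eps i - eps j"
      unfolding pos_roots_A_def by blast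
    then show ?thesis
      using count_roots_mset_root[OF upper_supported_root_multiplicities]
      by (simp add: root_multiplicities_def)
  next
    case False
    then show ?thesis
      using assms count_roots_mset_nonroot[OF upper_supported_root_multiplicities]
      by (metis count_inI subsetD)
  qed
qed

lemma root_multiplicities_roots_mset:
  assumes "upper_supported r m"
  shows "root_multiplicities r (roots_mset r m) = m"
proof (intro ext)
  fix i j
  show "root_multiplicities r (roots_mset r m) i j = m i j"
    using assms count_roots_mset_root[OF assms, of i j]
    unfolding root_multiplicities_def upper_supported_def by auto
qed

lemma kostant_A_eq_card_flows: "kostant_A r \<mu> = card (flows r \<mu>)"
  unfolding kostant_A_def
proof (rule bij_betw_same_card[OF bij_betw_byWitness[where f' = "roots_mset r"]])
  let ?K = "{M. set_mset M \<subseteq> pos_roots_A r \<and> sum_mset M = \<mu>}"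
  show "\<forall>M\<in>?K. roots_mset r (root_multiplicities r M) = M"
    using roots_mset_root_multiplicities by blast
  show "\<forall>m\<in>flows r \<mu>. root_multiplicities r (roots_mset r m) = m"
    unfolding flows_def using root_multiplicities_roots_mset by blast
  show "root_multiplicities r ` ?K \<subseteq> flows r \<mu>"
  proof
    fix m assume "m \<in> root_multiplicities r ` ?K"
    then obtain M where M: "M \<in> ?K" and m: "m = root_multiplicities r M" by blast
    have "net_flow r m = sum_mset (roots_mset r m)"
      unfolding m by (simp add: sum_mset_roots_mset upper_supported_root_multiplicities)
    also have "\<dots> = \<mu>"
      using M roots_mset_root_multiplicities m by simp
    finally show "m \<in> flows r \<mu>"
      unfolding flows_def using upper_supported_root_multiplicities m by blast
  qed
  show "roots_mset r ` flows r \<mu> \<subseteq> ?K"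
  proof
    fix M assume "M \<in> roots_mset r ` flows r \<mu>"
    then obtain m where m: "upper_supported r m" "net_flow r m = \<mu>" and M: "M = roots_mset r m"
      unfolding flows_def by blast
    have "set_mset M \<subseteq> pos_roots_A r"
      using count_roots_mset_nonroot[OF m(1)] M by (metis not_in_iff subsetI)
    then show "M \<in> ?K"
      using sum_mset_roots_mset[OF m(1)] m(2) M by simp
  qed
qed

abbreviation scaled_highest_root :: "nat \<Rightarrow> nat \<Rightarrow> nat \<Rightarrow> int" where
  "scaled_highest_root r n \<equiv> \<lambda>k. int n * (eps 1 k - eps (r + 1) k)"

lemma net_flow_eq_scaled_highest_root_iff:
  assumes supp: "upper_supported r m" and "1 \<le> r"
  shows "net_flow r m = scaled_highest_root r n \<longleftrightarrow>
    (\<forall>t<r. outflow r m (t + 1) = (if t = 0 then n else 0) + inflow r m (t + 1)) \<and>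
    inflow r m (r + 1) = n"
proof
  assume net: "net_flow r m = scaled_highest_root r n"
  show "(\<forall>t<r. outflow r m (t + 1) = (if t = 0 then n else 0) + inflow r m (t + 1)) \<and>
      inflow r m (r + 1) = n"
  proof (intro conjI allI impI)
    fix t
    assume "t < r"
    then show "outflow r m (t + 1) = (if t = 0 then n else 0) + inflow r m (t + 1)"
      using fun_cong[OF net, of "t + 1"] by (auto simp: net_flow_def eps_def)
  next
    show "inflow r m (r + 1) = n"
      using fun_cong[OF net, of "r + 1"] outflow_sink[OF supp] \<open>1 \<le> r\<close>
      by (simp add: net_flow_def eps_def)
  qed
next
  assume conservation: "(\<forall>t<r. outflow r m (t + 1) = (if t = 0 then n else 0) + inflow r m (t + 1)) \<and>
      inflow r m (r + 1) = n"
  show "net_flow r m = scaled_highest_root r n"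
  proof
    fix k
    consider "k = 0 \<or> r + 1 < k" | t where "t < r" "k = t + 1" | "k = r + 1"
      by (cases k) force+
    then show "net_flow r m k = scaled_highest_root r n k"
    proof cases
      case 1
      then show ?thesis
        using flow_vanishes_outside[OF supp] by (auto simp: net_flow_def eps_def)
    next
      case 2
      then show ?thesis
        using conservation by (simp add: net_flow_def eps_def)
    next
      case 3
      then show ?thesis
        using conservation outflow_sink[OF supp] \<open>1 \<le> r\<close> by (simp add: net_flow_def eps_def)
    qed
  qed
qed

definition juggling_seqs :: "(nat \<Rightarrow> int) \<Rightarrow> (nat \<Rightarrow> int) \<Rightarrow> nat \<Rightarrow> (nat \<Rightarrow> int) list set" where
  "juggling_seqs a b n = {ss.
      length ss = n + 1 \<and> ss ! 0 = a \<and> ss ! n = b \<and>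
      (\<forall>i\<le>n. juggling_state (ss ! i)) \<and>
      (\<forall>i<n. js_step (ss ! i) (ss ! (i + 1)))}"

lemma js_eq_card_juggling_seqs: "js a b n = card (juggling_seqs a b n)"
  unfolding js_def juggling_seqs_def ..

text \<open>The state at time t of the juggling sequence of a flow: height k counts the balls of the
  initial state \<open>\<langle>n\<rangle>\<close> and the balls thrown at times 1, ..., t that land at time t + k.\<close>

definition flow_state :: "nat \<Rightarrow> (nat \<Rightarrow> nat \<Rightarrow> nat) \<Rightarrow> nat \<Rightarrow> nat \<Rightarrow> int" where
  "flow_state n m t k =
     (if k = 0 then 0 else (if t = 0 \<and> k = 1 then int n else 0) + int (\<Sum>i\<in>{1..t}. m i (t + k)))"

lemma flow_state_0: "flow_state n m 0 = single_state n"
  unfolding flow_state_def single_state_def by auto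

lemma flow_state_Suc:
  "1 \<le> k \<Longrightarrow> flow_state n m (Suc t) k = flow_state n m t (k + 1) + int (m (t + 1) (t + 1 + k))"
  unfolding flow_state_def by (simp add: add.commute add.left_commute)

lemma flow_state_high:
  assumes "upper_supported r m" and "2 \<le> k" and "r + 1 < t + k"
  shows "flow_state n m t k = 0"
proof -
  have "m i (t + k) = 0" for i
    using assms(1,3) unfolding upper_supported_def by force
  then show ?thesis
    using assms(2) by (simp add: flow_state_def)
qed

lemma flow_state_one:
  assumes "upper_supported r m" and "t \<le> r"
  shows "flow_state n m t 1 = (if t = 0 then int n else 0) + int (inflow r m (t + 1))"
proof -
  have "(\<Sum>i\<in>{1..t}. m i (t + 1)) = inflow r m (t + 1)"
    unfolding inflow_def
  proof (rule sum.mono_neutral_left)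
    show "\<forall>i\<in>{..r + 1} - {1..t}. m i (t + 1) = 0"
      using assms(1) unfolding upper_supported_def by force
  qed (use assms(2) in auto)
  then show ?thesis
    by (simp add: flow_state_def add.commute)
qed

lemma juggling_state_flow_state:
  assumes "upper_supported r m"
  shows "juggling_state (flow_state n m t)"
proof -
  have "k \<le> r + 1" if "flow_state n m t k \<noteq> 0" for k
  proof (rule ccontr)
    assume "\<not> k \<le> r + 1"
    then have "2 \<le> k" "r + 1 < t + k" by auto
    then show False
      using flow_state_high[OF assms] that by blast
  qed
  then have "{k. flow_state n m t k \<noteq> 0} \<subseteq> {..r + 1}"
    by (simp add: subset_iff)
  then have "finite {k. flow_state n m t k \<noteq> 0}"
    by (rule finite_subset) simp
  moreover have "flow_state n m t 0 = 0"
    by (simp add: flow_state_def)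
  ultimately show ?thesis
    unfolding juggling_state_def by blast
qed

lemma outflow_eq_sum_throws:
  assumes "upper_supported r m"
  shows "outflow r m i = (\<Sum>k | m i (i + k) \<noteq> 0. m i (i + k))"
proof -
  have "outflow r m i = (\<Sum>j | m i j \<noteq> 0. m i j)"
    unfolding outflow_def using assms unfolding upper_supported_def
    by (intro sum.mono_neutral_right) auto
  also have "\<dots> = (\<Sum>k | m i (i + k) \<noteq> 0. m i (i + k))"
    using assms unfolding upper_supported_def
    by (intro sum.reindex_bij_witness[where i = "\<lambda>k. i + k" and j = "\<lambda>j. j - i"])
       (auto simp: less_imp_le_nat)
  finally show ?thesis .
qed

lemma js_step_flow_state:
  assumes supp: "upper_supported r m" and "t \<le> r"
    and conservation: "outflow r m (t + 1) = (if t = 0 then n else 0) + inflow r m (t + 1)"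
  shows "js_step (flow_state n m t) (flow_state n m (t + 1))"
  unfolding js_step_def
proof (intro exI[where x = "\<lambda>k. m (t + 1) (t + 1 + k)"] conjI allI impI)
  show "m (t + 1) (t + 1 + 0) = 0"
    using supp unfolding upper_supported_def by (metis add_0_right less_irrefl)
  have "k \<le> r + 1" if "m (t + 1) (t + 1 + k) \<noteq> 0" for k
  proof -
    have "t + 1 + k \<le> r + 1"
      using supp that unfolding upper_supported_def by blast
    then show ?thesis by simp
  qed
  then have "{k. m (t + 1) (t + 1 + k) \<noteq> 0} \<subseteq> {..r + 1}"
    by (auto simp: subset_iff)
  then show "finite {k. m (t + 1) (t + 1 + k) \<noteq> 0}"
    by (rule finite_subset) simp
  show "int (\<Sum>k | m (t + 1) (t + 1 + k) \<noteq> 0. m (t + 1) (t + 1 + k)) = flow_state n m t 1"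
    using outflow_eq_sum_throws[OF supp, of "t + 1"] conservation flow_state_one[OF supp \<open>t \<le> r\<close>]
    by simp
next
  fix k :: nat
  assume "1 \<le> k"
  then show "flow_state n m (t + 1) k = flow_state n m t (k + 1) + int (m (t + 1) (t + 1 + k))"
    using flow_state_Suc by simp
qed

lemma flow_state_final:
  assumes supp: "upper_supported r m" and "1 \<le> r" and "inflow r m (r + 1) = n"
  shows "flow_state n m r = single_state n"
proof
  fix k :: nat
  consider "k = 0" | "k = 1" | "2 \<le> k" by arith
  then show "flow_state n m r k = single_state n k"
  proof cases
    case 1
    then show ?thesis
      by (simp add: flow_state_def single_state_def)
  next
    case 2
    then show ?thesis
      using flow_state_one[OF supp, of r n] assms(2,3) by (simp add: single_state_def)
  next
    case 3
    then show ?thesis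
      using flow_state_high[OF supp, of k r n] by (simp add: single_state_def)
  qed
qed

definition flow_states :: "nat \<Rightarrow> nat \<Rightarrow> (nat \<Rightarrow> nat \<Rightarrow> nat) \<Rightarrow> (nat \<Rightarrow> int) list" where
  "flow_states n r m = map (flow_state n m) [0..<r + 1]"

lemma nth_flow_states: "t \<le> r \<Longrightarrow> flow_states n r m ! t = flow_state n m t"
  unfolding flow_states_def by (simp del: upt_Suc)

lemma flow_states_in_juggling_seqs:
  assumes "m \<in> flows r (scaled_highest_root r n)" and "1 \<le> r"
  shows "flow_states n r m \<in> juggling_seqs (single_state n) (single_state n) r"
proof -
  have supp: "upper_supported r m"
    and conservation: "\<forall>t<r. outflow r m (t + 1) = (if t = 0 then n else 0) + inflow r m (t + 1)"
    and sink: "inflow r m (r + 1) = n"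
    using assms net_flow_eq_scaled_highest_root_iff[of r m n] unfolding flows_def by auto
  show ?thesis
    unfolding juggling_seqs_def
    using nth_flow_states flow_state_0 flow_state_final[OF supp \<open>1 \<le> r\<close> sink]
      juggling_state_flow_state[OF supp] js_step_flow_state[OF supp] conservation
    by (auto simp: flow_states_def simp del: upt_Suc)
qed

text \<open>The inverse map: the number of balls thrown at time i to height j - i is the multiplicity
  \<open>c\<^sub>j\<^sub>-\<^sub>i\<close> of the step from state i - 1 to state i, read off from the two states.\<close>

definition throws :: "nat \<Rightarrow> (nat \<Rightarrow> int) list \<Rightarrow> nat \<Rightarrow> nat \<Rightarrow> nat" where
  "throws r ss i j =
     (if 1 \<le> i \<and> i \<le> r \<and> i < j then nat ((ss ! i) (j - i) - (ss ! (i - 1)) (j - i + 1)) else 0)"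

lemma js_step_throws:
  assumes "ss \<in> juggling_seqs a b r" and "t < r"
  shows "int (\<Sum>k | throws r ss (t + 1) (t + 1 + k) \<noteq> 0. throws r ss (t + 1) (t + 1 + k)) = (ss ! t) 1"
    and "1 \<le> k \<Longrightarrow> (ss ! (t + 1)) k = (ss ! t) (k + 1) + int (throws r ss (t + 1) (t + 1 + k))"
proof -
  obtain c :: "nat \<Rightarrow> nat" where c0: "c 0 = 0" and sum: "int (\<Sum>k | c k \<noteq> 0. c k) = (ss ! t) 1"
    and step: "\<And>k. 1 \<le> k \<Longrightarrow> (ss ! (t + 1)) k = (ss ! t) (k + 1) + int (c k)"
    using assms unfolding juggling_seqs_def js_step_def by blast
  have "c = (\<lambda>k. throws r ss (t + 1) (t + 1 + k))"
  proof
    fix k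
    show "c k = throws r ss (t + 1) (t + 1 + k)"
      using c0 step[of k] \<open>t < r\<close> by (cases "k = 0") (simp_all add: throws_def)
  qed
  then show "int (\<Sum>k | throws r ss (t + 1) (t + 1 + k) \<noteq> 0. throws r ss (t + 1) (t + 1 + k)) = (ss ! t) 1"
    and "1 \<le> k \<Longrightarrow> (ss ! (t + 1)) k = (ss ! t) (k + 1) + int (throws r ss (t + 1) (t + 1 + k))"
    using sum step by simp_all
qed

lemma juggling_seq_eq_flow_state:
  assumes ss: "ss \<in> juggling_seqs (single_state n) b r"
  shows "t \<le> r \<Longrightarrow> ss ! t = flow_state n (throws r ss) t"
proof (induction t)
  case 0
  then show ?case
    using ss flow_state_0 unfolding juggling_seqs_def by simp
next
  case (Suc t)
  show ?case
  proof
    fix k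
    show "(ss ! Suc t) k = flow_state n (throws r ss) (Suc t) k"
    proof (cases "k = 0")
      case True
      then show ?thesis
        using ss Suc.prems unfolding juggling_seqs_def juggling_state_def by (simp add: flow_state_def)
    next
      case False
      then show ?thesis
        using js_step_throws(2)[OF ss, of t k] Suc flow_state_Suc[of k] by simp
    qed
  qed
qed

lemma upper_supported_throws:
  assumes ss: "ss \<in> juggling_seqs (single_state n) (single_state n) r" and "1 \<le> r"
  shows "upper_supported r (throws r ss)"
  unfolding upper_supported_def
proof (intro allI impI)
  let ?m = "throws r ss"
  fix i j
  assume nonzero: "?m i j \<noteq> 0"
  then have i: "1 \<le> i" "i \<le> r" "i < j"
    by (simp_all add: throws_def split: if_splits)
  have "j \<le> r + 1"
  proof (rule ccontr)
    assume "\<not> j \<le> r + 1"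
    then have "j - r \<noteq> 1" by arith
    moreover have "flow_state n ?m r = single_state n"
      using juggling_seq_eq_flow_state[OF ss, of r] ss unfolding juggling_seqs_def by simp
    ultimately have "flow_state n ?m r (j - r) = 0"
      by (simp add: single_state_def)
    then have "(\<Sum>i\<in>{1..r}. ?m i j) = 0"
      using \<open>\<not> j \<le> r + 1\<close> \<open>1 \<le> r\<close> by (simp add: flow_state_def del: of_nat_sum)
    then show False
      using nonzero i by simp
  qed
  with i show "1 \<le> i \<and> i < j \<and> j \<le> r + 1" by simp
qed

lemma throws_in_flows:
  assumes ss: "ss \<in> juggling_seqs (single_state n) (single_state n) r" and "1 \<le> r"
  shows "throws r ss \<in> flows r (scaled_highest_root r n)"
proof -
  let ?m = "throws r ss"
  have supp: "upper_supported r ?m"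
    using upper_supported_throws[OF assms] .
  have final: "flow_state n ?m r = single_state n"
    using juggling_seq_eq_flow_state[OF ss, of r] ss unfolding juggling_seqs_def by simp
  have "outflow r ?m (t + 1) = (if t = 0 then n else 0) + inflow r ?m (t + 1)" if "t < r" for t
  proof -
    have "int (outflow r ?m (t + 1)) = (ss ! t) 1"
      using outflow_eq_sum_throws[OF supp, of "t + 1"] js_step_throws(1)[OF ss that] by simp
    also have "\<dots> = (if t = 0 then int n else 0) + int (inflow r ?m (t + 1))"
      using juggling_seq_eq_flow_state[OF ss, of t] flow_state_one[OF supp, of t n] that by simp
    finally show ?thesis by (cases "t = 0") simp_all
  qed
  moreover have "inflow r ?m (r + 1) = n"
    using flow_state_one[OF supp, of r n] final \<open>1 \<le> r\<close> by (simp add: single_state_def)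
  ultimately show ?thesis
    using net_flow_eq_scaled_highest_root_iff[OF supp \<open>1 \<le> r\<close>] supp unfolding flows_def by blast
qed

lemma throws_flow_states:
  assumes supp: "upper_supported r m"
  shows "throws r (flow_states n r m) = m"
proof (intro ext)
  fix i j
  show "throws r (flow_states n r m) i j = m i j"
  proof (cases "1 \<le> i \<and> i \<le> r \<and> i < j")
    case True
    then have "flow_state n m (Suc (i - 1)) (j - i) = flow_state n m (i - 1) (j - i + 1) + int (m i j)"
      using flow_state_Suc[of "j - i" n m "i - 1"] by (simp add: Suc_le_eq)
    moreover have "flow_states n r m ! i = flow_state n m i"
      and "flow_states n r m ! (i - 1) = flow_state n m (i - 1)"
      using True by (auto intro!: nth_flow_states)
    ultimately show ?thesis
      using True by (simp add: throws_def)
  next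
    case False
    have "m i j = 0"
    proof (rule ccontr)
      assume "m i j \<noteq> 0"
      then have "1 \<le> i \<and> i < j \<and> j \<le> r + 1"
        using supp unfolding upper_supported_def by blast
      with False show False by simp
    qed
    with False show ?thesis
      unfolding throws_def by auto
  qed
qed

lemma flow_states_throws:
  assumes ss: "ss \<in> juggling_seqs (single_state n) b r"
  shows "flow_states n r (throws r ss) = ss"
proof (rule nth_equalityI)
  show "length (flow_states n r (throws r ss)) = length ss"
    using ss unfolding flow_states_def juggling_seqs_def by simp
  fix t
  assume "t < length (flow_states n r (throws r ss))"
  then have "t \<le> r"
    unfolding flow_states_def by simp
  then show "flow_states n r (throws r ss) ! t = ss ! t"
    using nth_flow_states juggling_seq_eq_flow_state[OF ss] by simp
qed

lemma card_flows_eq_js: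
  assumes "1 \<le> r"
  shows "card (flows r (scaled_highest_root r n)) = js (single_state n) (single_state n) r"
  unfolding js_eq_card_juggling_seqs
proof (rule bij_betw_same_card[OF bij_betw_byWitness[where f' = "throws r"]])
  show "\<forall>m\<in>flows r (scaled_highest_root r n). throws r (flow_states n r m) = m"
    unfolding flows_def using throws_flow_states by blast
  show "\<forall>ss\<in>juggling_seqs (single_state n) (single_state n) r. flow_states n r (throws r ss) = ss"
    using flow_states_throws by blast
  show "flow_states n r ` flows r (scaled_highest_root r n) \<subseteq> juggling_seqs (single_state n) (single_state n) r"
    using flow_states_in_juggling_seqs[OF _ assms] by blast
  show "throws r ` juggling_seqs (single_state n) (single_state n) r \<subseteq> flows r (scaled_highest_root r n)"
    using throws_in_flows[OF _ assms] by blast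
qed

theorem mainTheorem5:
  fixes r n :: nat
  assumes "r \<ge> 1" and "n \<ge> 1"
  shows "kostant_A r ((\<lambda>k. int n * (eps 1 k - eps (r + 1) k))) =
         js (single_state n) (single_state n) r"
  using kostant_A_eq_card_flows card_flows_eq_js[OF assms(1)] by simp

end
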